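(* Let $N\ge 2$. Consider the encoding of basis states $|k_1,k_2,\dots\rangle$, $k_i\in\mathbb Z_N$, with the convention $k_m=0$ for $m\le 0$: $$|k_1,k_2,\dots\rangle\longmapsto\bigotimes_{i=1}^{+\infty}|k_i+k_{i-2},\;k_i+k_{i-1}+k_{i-2}\rangle,$$ where all additions are modulo $N$ (so input $k_i$ contributes to output registers $2i-1$ and $2i$). Then this quantum convolutional code corrects up to one spin flip error for every four consecutive quantum registers, i.e. it corrects the error set consisting of all operators $\bigotimes_{r\ge1}X_r^{a_r}$ ($a_r\in\mathbb Z_N$) such that among any four consecutive output registers at most one has $a_r\neq 0$.
   Context: Each register is an $N$-state system with orthonormal basis $|j\rangle$, $j\in\mathbb Z_N$; $X_r$ denotes the spin flip $|j\rangle\mapsto|j+1\bmod N\rangle$ on output register $r$. An encoding $|\mathbf k\rangle\mapsto|\mathbf k_{\rm encode}\rangle$ corrects an error set $E$ if for all $\mathcal A,\mathcal B\in E$ and all input labels $\mathbf k,\mathbf k'$: $\langle\mathbf k'_{\rm encode}|\mathcal A^\dagger\mathcal B|\mathbf k_{\rm encode}\rangle=\Lambda_{\mathcal A,\mathcal B}\delta_{\mathbf k\mathbf k'}$ with $\Lambda_{\mathcal A,\mathcal B}\in\mathbb C$ independent of $\mathbf k,\mathbf k'$. *)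

theory Defs
  imports Complex_Main
begin

text \<open>Registers: basis labels of the (infinite) chain of N-state registers are
sequences s :: nat \<Rightarrow> int, register r \<ge> 1 carrying the value s r \<in> {0..<N}
(index 0 is unused and fixed to 0).  Input registers are indexed by i \<ge> 1,
output registers by r \<ge> 1.\<close>

definition input_labels :: "int \<Rightarrow> (nat \<Rightarrow> int) set" where
  "input_labels N = {k. k 0 = 0 \<and> (\<forall>i. 0 \<le> k i \<and> k i < N)}"

definition kval :: "(nat \<Rightarrow> int) \<Rightarrow> int \<Rightarrow> int" where
  "kval k m = (if m \<ge> 1 then k (nat m) else 0)"

text \<open>The encoding: input i contributes to output registers 2i-1 and 2i,
register 2i-1 holds k_i + k_(i-2), register 2i holds k_i + k_(i-1) + k_(i-2) (mod N).\<close>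
definition encode :: "int \<Rightarrow> (nat \<Rightarrow> int) \<Rightarrow> (nat \<Rightarrow> int)" where
  "encode N k r =
     (if r = 0 then 0
      else let i = int ((r + 1) div 2) in
        if odd r then (kval k i + kval k (i - 2)) mod N
        else (kval k i + kval k (i - 1) + kval k (i - 2)) mod N)"

text \<open>Action of the operator Tensor_r X_r^(a r) on a basis label.\<close>
definition apply_X :: "int \<Rightarrow> (nat \<Rightarrow> int) \<Rightarrow> (nat \<Rightarrow> int) \<Rightarrow> (nat \<Rightarrow> int)" where
  "apply_X N a s = (\<lambda>r. (s r + a r) mod N)"

definition basis_inner :: "(nat \<Rightarrow> int) \<Rightarrow> (nat \<Rightarrow> int) \<Rightarrow> complex" where
  "basis_inner s t = (if s = t then 1 else 0)"

text \<open>Matrix element <u| A^dagger B |v> = <A u | B v> for spin-flip operators A, B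
given by exponent sequences a, b.\<close>
definition matrix_elem :: "int \<Rightarrow> (nat \<Rightarrow> int) \<Rightarrow> (nat \<Rightarrow> int) \<Rightarrow> (nat \<Rightarrow> int) \<Rightarrow> (nat \<Rightarrow> int) \<Rightarrow> complex" where
  "matrix_elem N a b u v = basis_inner (apply_X N a u) (apply_X N b v)"

definition error_set :: "int \<Rightarrow> (nat \<Rightarrow> int) set" where
  "error_set N = {a. a 0 = 0 \<and> (\<forall>r. 0 \<le> a r \<and> a r < N) \<and>
                     (\<forall>r\<ge>1. card {j \<in> {r..r+3}. a j \<noteq> 0} \<le> 1)}"

text \<open>Knill--Laflamme error-correction condition.\<close>
definition corrects :: "int \<Rightarrow> ((nat \<Rightarrow> int) \<Rightarrow> (nat \<Rightarrow> int)) \<Rightarrow> (nat \<Rightarrow> int) set \<Rightarrow> (nat \<Rightarrow> int) set \<Rightarrow> bool" where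
  "corrects N enc K E \<longleftrightarrow>
     (\<forall>a\<in>E. \<forall>b\<in>E. \<exists>\<Lambda>::complex. \<forall>k\<in>K. \<forall>k'\<in>K.
        matrix_elem N a b (enc k') (enc k) = \<Lambda> * (if k = k' then 1 else 0))"

end

theory Submission
  imports Defs "HOL-Number_Theory.Cong"
begin

text \<open>The encoding is linear modulo N.  Suppose X^a applied to the codeword of k' equals X^b
applied to that of k, where k \<noteq> k'.  Let j be the first input on which k and k' differ and
write d i = k' i - k i.  The codewords then differ on output registers 2j-1, 2j, 2j+1, 2j+2 by
d j, d j, d (j+1), d (j+1) + d j (mod N), and these differences must equal b - a there.  As
d j \<noteq> 0, b - a is nonzero on registers 2j-1 and 2j; since each of a, b flips at most one register
of this window, both vanish on 2j+1 and 2j+2, which forces d (j+1) = 0 and then d j = 0.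
For k = k' distinct flips give distinct states, so the constant is [a = b].\<close>

lemma apply_X_eq_imp_cong:
  "apply_X N a s = apply_X N b t \<Longrightarrow> [s r - t r = b r - a r] (mod N)"
  unfolding apply_X_def cong_iff_dvd_diff
  by (drule fun_cong[of _ _ r]) (simp add: mod_eq_dvd_iff algebra_simps)

lemma apply_X_inj:
  assumes "\<forall>r. 0 \<le> a r \<and> a r < N" and "\<forall>r. 0 \<le> b r \<and> b r < N"
    and "apply_X N a s = apply_X N b s"
  shows "a = b"
proof
  fix r
  have "[a r = b r] (mod N)"
    using apply_X_eq_imp_cong[OF assms(3), of r] by (simp add: cong_iff_dvd_diff)
  then show "a r = b r"
    using assms(1,2) by (metis cong_less_imp_eq_int)
qed

lemma cong_diff_mod_mod_iff: "[x mod N - y mod N = z] (mod N) \<longleftrightarrow> [x - y = z] (mod N)"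
  for x y z N :: int
  by (simp add: cong_def mod_diff_eq)

lemma encode_odd: "encode N k (2*n + 1) = (kval k (int n + 1) + kval k (int n - 1)) mod N"
  unfolding encode_def by (simp add: Let_def algebra_simps)

lemma encode_even:
  "encode N k (2*n + 2) = (kval k (int n + 1) + kval k (int n) + kval k (int n - 1)) mod N"
proof -
  have "(2*n + 2 + 1) div 2 = n + 1" by simp
  then show ?thesis unfolding encode_def by (simp add: Let_def algebra_simps)
qed

lemma encode_odd_diff_cong:
  "[encode N k' (2*n + 1) - encode N k (2*n + 1) =
     (kval k' (int n + 1) - kval k (int n + 1)) + (kval k' (int n - 1) - kval k (int n - 1))] (mod N)"
  unfolding encode_odd cong_diff_mod_mod_iff by (simp add: algebra_simps)

lemma encode_even_diff_cong:
  "[encode N k' (2*n + 2) - encode N k (2*n + 2) =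
     (kval k' (int n + 1) - kval k (int n + 1)) + (kval k' (int n) - kval k (int n))
       + (kval k' (int n - 1) - kval k (int n - 1))] (mod N)"
  unfolding encode_even cong_diff_mod_mod_iff by (simp add: algebra_simps)

lemma input_labels_first_difference:
  assumes k: "k \<in> input_labels N" and k': "k' \<in> input_labels N" and "k \<noteq> k'"
  obtains n where "\<And>m. m \<le> int n \<Longrightarrow> kval k' m = kval k m"
    and "\<not> [kval k' (int n + 1) = kval k (int n + 1)] (mod N)"
proof -
  obtain j where "k j \<noteq> k' j" and agree: "\<forall>i<j. k i = k' i"
    using \<open>k \<noteq> k'\<close> exists_least_iff[of "\<lambda>j. k j \<noteq> k' j"] by auto
  moreover have "k 0 = k' 0" using k k' unfolding input_labels_def by simp
  ultimately obtain n where j: "j = Suc n" by (cases j) auto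
  have "kval k' m = kval k m" if "m \<le> int n" for m
    using agree that j unfolding kval_def by auto
  moreover have "\<not> [kval k' (int n + 1) = kval k (int n + 1)] (mod N)"
  proof
    assume "[kval k' (int n + 1) = kval k (int n + 1)] (mod N)"
    then have "[k' j = k j] (mod N)"
      unfolding kval_def j by (simp add: nat_add_distrib)
    moreover have "0 \<le> k j" "k j < N" "0 \<le> k' j" "k' j < N"
      using k k' unfolding input_labels_def by auto
    ultimately show False
      using \<open>k j \<noteq> k' j\<close> cong_less_imp_eq_int[of "k' j" N "k j"] by simp
  qed
  ultimately show thesis using that by blast
qed

lemma error_set_window_unique:
  assumes "a \<in> error_set N" and "r \<ge> 1" and "p \<in> {r..r+3}" and "q \<in> {r..r+3}"
    and "a p \<noteq> 0" and "a q \<noteq> 0"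
  shows "p = q"
proof (rule ccontr)
  assume "p \<noteq> q"
  have "{p, q} \<subseteq> {j \<in> {r..r+3}. a j \<noteq> 0}" using assms by auto
  then have "card {p, q} \<le> card {j \<in> {r..r+3}. a j \<noteq> 0}" by (intro card_mono) auto
  also have "\<dots> \<le> 1" using assms(1,2) unfolding error_set_def by blast
  finally show False using \<open>p \<noteq> q\<close> by simp
qed

lemma error_set_vanish_after_two_mismatches:
  assumes a: "a \<in> error_set N" and b: "b \<in> error_set N" and "r \<ge> 1"
    and "a r \<noteq> b r" and "a (r+1) \<noteq> b (r+1)" and q: "q \<in> {r+2, r+3}"
  shows "a q = 0"
proof (rule ccontr)
  assume "a q \<noteq> 0"
  have "a r = 0"
    using error_set_window_unique[OF a \<open>r \<ge> 1\<close>, of r q] q \<open>a q \<noteq> 0\<close> by (auto; blast)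
  moreover have "a (r+1) = 0"
    using error_set_window_unique[OF a \<open>r \<ge> 1\<close>, of "r+1" q] q \<open>a q \<noteq> 0\<close> by (auto; blast)
  ultimately have "b r \<noteq> 0" and "b (r+1) \<noteq> 0" using assms(4,5) by auto
  then show False using error_set_window_unique[OF b \<open>r \<ge> 1\<close>, of r "r+1"] by simp
qed

lemma encode_errors_distinguishable:
  assumes k: "k \<in> input_labels N" and k': "k' \<in> input_labels N" and "k \<noteq> k'"
    and a: "a \<in> error_set N" and b: "b \<in> error_set N"
  shows "apply_X N a (encode N k') \<noteq> apply_X N b (encode N k)"
proof
  assume flips: "apply_X N a (encode N k') = apply_X N b (encode N k)"
  obtain n where agree: "\<And>m. m \<le> int n \<Longrightarrow> kval k' m = kval k m"
    and first: "\<not> [kval k' (int n + 1) = kval k (int n + 1)] (mod N)"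
    using input_labels_first_difference[OF k k' \<open>k \<noteq> k'\<close>] by blast
  define D where "D m = kval k' m - kval k m" for m
  have D_first: "\<not> [D (int n + 1) = 0] (mod N)"
    using first unfolding D_def by (simp add: cong_diff_iff_cong_0)
  have reg_diff: "[encode N k' r - encode N k r = b r - a r] (mod N)" for r
    using apply_X_eq_imp_cong[OF flips] .
  have reg_2n1: "[D (int n + 1) = b (2*n+1) - a (2*n+1)] (mod N)"
    using cong_trans[OF cong_sym[OF encode_odd_diff_cong[of N k' n k]] reg_diff] agree[of "int n - 1"]
    unfolding D_def by simp
  have reg_2n2: "[D (int n + 1) = b (2*n+2) - a (2*n+2)] (mod N)"
    using cong_trans[OF cong_sym[OF encode_even_diff_cong[of N k' n k]] reg_diff]
      agree[of "int n - 1"] agree[of "int n"]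
    unfolding D_def by simp
  have reg_2n3: "[D (int n + 2) = b (2*Suc n+1) - a (2*Suc n+1)] (mod N)"
    using cong_trans[OF cong_sym[OF encode_odd_diff_cong[of N k' "Suc n" k]] reg_diff] agree[of "int n"]
    unfolding D_def by (simp add: algebra_simps)
  have reg_2n4: "[D (int n + 2) + D (int n + 1) = b (2*Suc n+2) - a (2*Suc n+2)] (mod N)"
    using cong_trans[OF cong_sym[OF encode_even_diff_cong[of N k' "Suc n" k]] reg_diff] agree[of "int n"]
    unfolding D_def by (simp add: algebra_simps)
  have "a (2*n+1) \<noteq> b (2*n+1)" and "a (2*n+2) \<noteq> b (2*n+2)"
    using reg_2n1 reg_2n2 D_first by auto
  then have "a q = b q" if "q \<in> {2*Suc n+1, 2*Suc n+2}" for q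
    using error_set_vanish_after_two_mismatches[OF a b, of "2*n+1" q]
      error_set_vanish_after_two_mismatches[OF b a, of "2*n+1" q] that by fastforce
  then have "[D (int n + 2) = 0] (mod N)" and "[D (int n + 2) + D (int n + 1) = 0] (mod N)"
    using reg_2n3 reg_2n4 by simp_all
  then have "[D (int n + 1) = 0] (mod N)"
    by (metis cong_add_lcancel_0 cong_trans cong_sym)
  with D_first show False ..
qed

theorem lemma3:
  fixes N :: int
  assumes "N \<ge> 2"
  shows "corrects N (encode N) (input_labels N) (error_set N)"
proof -
  have "matrix_elem N a b (encode N k') (encode N k) =
          (if a = b then 1 else 0) * (if k = k' then 1 else 0)"
    if a: "a \<in> error_set N" and b: "b \<in> error_set N"
      and k: "k \<in> input_labels N" and k': "k' \<in> input_labels N" for a b k k'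
  proof (cases "k = k'")
    case True
    have "\<forall>r. 0 \<le> a r \<and> a r < N" and "\<forall>r. 0 \<le> b r \<and> b r < N"
      using a b unfolding error_set_def by blast+
    then have "apply_X N a (encode N k) = apply_X N b (encode N k) \<Longrightarrow> a = b"
      by (rule apply_X_inj)
    with True show ?thesis unfolding matrix_elem_def basis_inner_def by auto
  next
    case False
    then show ?thesis
      using encode_errors_distinguishable[OF k k' False a b]
      unfolding matrix_elem_def basis_inner_def by simp
  qed
  then show ?thesis unfolding corrects_def by blast
qed

end
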